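(* Let $h\in R$ and let $x$ be the binary representation of $h$, and suppose $x\ne 1001000$. Then every occurrence of $1000$ as a contiguous substring of $x$ starts at the first position of $x$ (i.e. $1000$ can occur in $x$ only as a prefix).
   Context: Stern's sequence $(a(n))_{n\ge0}$: $a(0)=0$, $a(1)=1$, $a(2n)=a(n)$, $a(2n+1)=a(n)+a(n+1)$; $s(n)=a(n+1)$ for $n\ge0$. $R$ is the set of record-setters of $s$, i.e. indices $v\ge0$ with $s(i)<s(v)$ for all $i<v$. The binary representation of a positive integer has no leading zeros; $0$ is represented by the string $0$. *)

theory Defs
  imports Main
begin

function stern :: "nat \<Rightarrow> nat" where
  "stern n = (if n = 0 then 0 else if n = 1 then 1
              else if even n then stern (n div 2)
              else stern (n div 2) + stern (n div 2 + 1))"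
  by pat_completeness auto
termination
  by (relation "measure id") (auto elim!: oddE)

definition s :: "nat \<Rightarrow> nat" where
  "s n = stern (n + 1)"

definition R :: "nat set" where
  "R = {v. \<forall>i<v. s i < s v}"

fun bin_pos :: "nat \<Rightarrow> nat list" where
  "bin_pos n = (if n = 0 then [] else bin_pos (n div 2) @ [n mod 2])"

definition bin :: "nat \<Rightarrow> nat list" where
  "bin n = (if n = 0 then [0] else bin_pos n)"

end

theory Submission
  imports Defs "HOL-Library.Product_Order"
begin

text \<open>Writing a word over \<open>{0,1}\<close> as the product of the matrices
  \<open>[[1,1],[0,1]]\<close> (digit 0) and \<open>[[1,0],[1,1]]\<close> (digit 1), the bottom row of the product for
  the binary representation of \<open>n\<close> is \<open>(a(n), a(n+1))\<close>, so \<open>s(n)\<close> is its lower-right entry.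
  If \<open>bin h = A P C\<close> and some word \<open>G\<close> with \<open>A G C\<close> denoting a smaller number has an
  entrywise larger matrix than \<open>P\<close> (for a prefix \<open>P\<close> only the bottom rows matter, for a suffix
  only the right columns), then \<open>s\<close> does not decrease under the replacement, so \<open>h\<close>
  is not a record-setter. Seventeen such replacements cover every way in which \<open>1000\<close> can
  occur in \<open>bin h\<close> after the first position, except for \<open>1001000\<close> itself.\<close>

text \<open>\<open>(a, b, c, d)\<close> stands for \<open>[[a, b], [c, d]]\<close>; \<open>\<le>\<close> on it is the entrywise order
  of \<open>Product_Order\<close>.\<close>

type_synonym mat2 = "nat \<times> nat \<times> nat \<times> nat"

fun mat_mult :: "mat2 \<Rightarrow> mat2 \<Rightarrow> mat2" where
  "mat_mult (a, b, c, d) (e, f, g, k) = (a*e + b*g, a*f + b*k, c*e + d*g, c*f + d*k)"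

definition mat_id :: mat2 where
  "mat_id = (1, 0, 0, 1)"

fun bottom_row :: "mat2 \<Rightarrow> nat \<times> nat" where
  "bottom_row (a, b, c, d) = (c, d)"

fun right_col :: "mat2 \<Rightarrow> nat \<times> nat" where
  "right_col (a, b, c, d) = (b, d)"

fun lower_right :: "mat2 \<Rightarrow> nat" where
  "lower_right (a, b, c, d) = d"

definition digit_mat :: "nat \<Rightarrow> mat2" where
  "digit_mat x = (if x = 0 then (1, 1, 0, 1) else (1, 0, 1, 1))"

definition word_mat :: "nat list \<Rightarrow> mat2" where
  "word_mat xs = foldl (\<lambda>M x. mat_mult M (digit_mat x)) mat_id xs"

definition word_val :: "nat list \<Rightarrow> nat" where
  "word_val xs = foldl (\<lambda>n x. 2 * n + x) 0 xs"

declare stern.simps [simp del] bin_pos.simps [simp del]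

lemma mat_mult_assoc: "mat_mult (mat_mult A B) C = mat_mult A (mat_mult B C)"
  by (cases A; cases B; cases C) (simp add: algebra_simps)

lemma mat_mult_id_left [simp]: "mat_mult mat_id A = A"
  and mat_mult_id_right [simp]: "mat_mult A mat_id = A"
  by (cases A, simp add: mat_id_def)+

lemma word_mat_Nil [simp]: "word_mat [] = mat_id"
  by (simp add: word_mat_def)

lemma word_mat_snoc: "word_mat (xs @ [x]) = mat_mult (word_mat xs) (digit_mat x)"
  by (simp add: word_mat_def)

lemma word_mat_append: "word_mat (xs @ ys) = mat_mult (word_mat xs) (word_mat ys)"
  by (induction ys rule: rev_induct)
    (simp_all add: word_mat_snoc mat_mult_assoc flip: append_assoc)

lemma lower_right_mult_mono:
  assumes "P \<le> G"
  shows "lower_right (mat_mult (mat_mult X P) Y) \<le> lower_right (mat_mult (mat_mult X G) Y)"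
  using assms by (cases X; cases P; cases G; cases Y) (simp add: add_mono mult_le_mono)

lemma lower_right_mult_mono_bottom_row:
  assumes "bottom_row P \<le> bottom_row G"
  shows "lower_right (mat_mult P Y) \<le> lower_right (mat_mult G Y)"
  using assms by (cases P; cases G; cases Y) (simp add: add_mono mult_le_mono)

lemma lower_right_mult_mono_right_col:
  assumes "right_col P \<le> right_col G"
  shows "lower_right (mat_mult X P) \<le> lower_right (mat_mult X G)"
  using assms by (cases X; cases P; cases G) (simp add: add_mono mult_le_mono)

lemma word_val_Nil [simp]: "word_val [] = 0"
  by (simp add: word_val_def)

lemma word_val_snoc: "word_val (xs @ [x]) = 2 * word_val xs + x"
  by (simp add: word_val_def)

lemma word_val_append: "word_val (xs @ ys) = word_val xs * 2 ^ length ys + word_val ys"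
  by (induction ys rule: rev_induct) (simp_all add: word_val_snoc flip: append_assoc)

lemma word_val_less_power: "set xs \<subseteq> {0, 1} \<Longrightarrow> word_val xs < 2 ^ length xs"
  by (induction xs rule: rev_induct) (auto simp: word_val_snoc)

lemma word_val_replace_less:
  assumes "set (A @ G @ C) \<subseteq> {0, 1}"
    and "2 ^ length (A @ P @ C) \<le> 2 * word_val (A @ P @ C)"
    and "length G < length P \<or> length G = length P \<and> word_val G < word_val P"
  shows "word_val (A @ G @ C) < word_val (A @ P @ C)"
  using assms(3)
proof
  assume "length G < length P"
  then have "2 * 2 ^ length (A @ G @ C) \<le> (2::nat) ^ length (A @ P @ C)"
    by (simp flip: power_Suc)
  with word_val_less_power[OF assms(1)] assms(2) show ?thesis
    by linarith
next
  assume "length G = length P \<and> word_val G < word_val P"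
  then show ?thesis
    by (simp add: word_val_append[of A] word_val_append[of G] word_val_append[of P])
qed

lemma bit_word_snoc_cases:
  assumes "set xs \<subseteq> {0, 1}"
  obtains "xs = []" | ys where "xs = ys @ [0]" "set ys \<subseteq> {0, 1}"
    | ys where "xs = ys @ [1]" "set ys \<subseteq> {0, 1}"
  using assms by (cases xs rule: rev_exhaust) auto

lemma bit_word_Cons_cases:
  assumes "set xs \<subseteq> {0, 1}"
  obtains "xs = []" | ys where "xs = 0 # ys" "set ys \<subseteq> {0, 1}"
    | ys where "xs = 1 # ys" "set ys \<subseteq> {0, 1}"
  using assms by (cases xs) auto

lemma bin_pos_0: "bin_pos 0 = []"
  by (simp add: bin_pos.simps)

lemma bin_pos_pos: "0 < n \<Longrightarrow> bin_pos n = bin_pos (n div 2) @ [n mod 2]"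
  by (simp add: bin_pos.simps[of n])

lemma bin_pos_bits: "set (bin_pos n) \<subseteq> {0, 1}"
proof (induction n rule: bin_pos.induct)
  case (1 n)
  then show ?case
    by (cases "n = 0") (auto simp: bin_pos_0 bin_pos_pos)
qed

lemma word_val_bin_pos: "word_val (bin_pos n) = n"
proof (induction n rule: bin_pos.induct)
  case (1 n)
  then show ?case
    by (cases "n = 0") (auto simp: bin_pos_0 bin_pos_pos word_val_snoc)
qed

lemma bin_pos_length: "0 < n \<Longrightarrow> 2 ^ length (bin_pos n) \<le> 2 * n"
proof (induction n rule: bin_pos.induct)
  case (1 n)
  then show ?case
    by (cases "n div 2 = 0") (auto simp: bin_pos_pos[of n] bin_pos_0)
qed

lemma bin_pos_hd: "0 < n \<Longrightarrow> hd (bin_pos n) = 1"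
proof (induction n rule: bin_pos.induct)
  case (1 n)
  then show ?case
    by (cases "n div 2 = 0") (auto simp: bin_pos_pos[of n] bin_pos_pos[of "n div 2"] bin_pos_0 hd_append)
qed

subsection \<open>Stern's sequence as a matrix product\<close>

lemma stern_0 [simp]: "stern 0 = 0"
  and stern_Suc_0 [simp]: "stern (Suc 0) = 1"
  by (simp_all add: stern.simps)

lemma stern_double: "stern (2 * n) = stern n"
  by (cases "n = 0") (simp_all add: stern.simps[of "2 * n"])

lemma stern_double_Suc: "stern (Suc (2 * n)) = stern n + stern (Suc n)"
  by (cases "n = 0") (simp_all add: stern.simps[of "Suc (2 * n)"])

lemma bottom_row_word_mat:
  "set xs \<subseteq> {0, 1} \<Longrightarrow> bottom_row (word_mat xs) = (stern (word_val xs), stern (Suc (word_val xs)))"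
proof (induction xs rule: rev_induct)
  case Nil
  then show ?case
    by (simp add: mat_id_def)
next
  case (snoc x xs)
  then obtain a b where M: "word_mat xs = (a, b, stern (word_val xs), stern (Suc (word_val xs)))"
    by (cases "word_mat xs") auto
  from snoc.prems have "x = 0 \<or> x = 1"
    by auto
  then show ?case
    using stern_double_Suc[of "word_val xs"] stern_double[of "Suc (word_val xs)"]
    by (auto simp: word_mat_snoc M digit_mat_def word_val_snoc stern_double)
qed

lemma s_word_val: "set xs \<subseteq> {0, 1} \<Longrightarrow> s (word_val xs) = lower_right (word_mat xs)"
  using bottom_row_word_mat[of xs] by (cases "word_mat xs") (simp add: s_def)

subsection \<open>Forbidden factors of record-setters\<close>

lemma record_setter_replace_factor:
  assumes "h \<in> R" "0 < h" "bin h = A @ P @ C" "set G \<subseteq> {0, 1}"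
    and "length G < length P \<or> length G = length P \<and> word_val G < word_val P"
  shows "lower_right (mat_mult (mat_mult (word_mat A) (word_mat G)) (word_mat C))
    < lower_right (mat_mult (mat_mult (word_mat A) (word_mat P)) (word_mat C))"
proof -
  have bits: "set (A @ P @ C) \<subseteq> {0, 1}" and val: "word_val (A @ P @ C) = h"
    and len: "2 ^ length (A @ P @ C) \<le> 2 * h"
    using assms(2,3) bin_pos_bits word_val_bin_pos bin_pos_length
    by (simp_all add: bin_def flip: assms(3))
  have bits': "set (A @ G @ C) \<subseteq> {0, 1}"
    using bits assms(4) by auto
  have "word_val (A @ G @ C) < h"
    using word_val_replace_less[OF bits' len[folded val] assms(5)] val by simp
  then have "s (word_val (A @ G @ C)) < s h"
    using assms(1) by (simp add: R_def)
  then show ?thesis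
    using s_word_val[OF bits] s_word_val[OF bits'] val
    by (simp add: word_mat_append mat_mult_assoc)
qed

lemma record_setter_no_factor:
  assumes "h \<in> R" "0 < h" "set G \<subseteq> {0, 1}"
    and "length G < length P \<or> length G = length P \<and> word_val G < word_val P"
    and "word_mat P \<le> word_mat G"
  shows "bin h \<noteq> A @ P @ C"
  using record_setter_replace_factor[OF assms(1,2) _ assms(3,4)] lower_right_mult_mono[OF assms(5)]
  by (metis not_le)

lemma record_setter_no_prefix:
  assumes "h \<in> R" "0 < h" "set G \<subseteq> {0, 1}"
    and "length G < length P \<or> length G = length P \<and> word_val G < word_val P"
    and "bottom_row (word_mat P) \<le> bottom_row (word_mat G)"
  shows "bin h \<noteq> P @ C"
  using record_setter_replace_factor[OF assms(1,2) _ assms(3,4), of "[]"]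
    lower_right_mult_mono_bottom_row[OF assms(5)]
  by (metis append_Nil mat_mult_id_left not_le word_mat_Nil)

lemma record_setter_no_suffix:
  assumes "h \<in> R" "0 < h" "set G \<subseteq> {0, 1}"
    and "length G < length P \<or> length G = length P \<and> word_val G < word_val P"
    and "right_col (word_mat P) \<le> right_col (word_mat G)"
  shows "bin h \<noteq> A @ P"
  using record_setter_replace_factor[OF assms(1,2) _ assms(3,4), of A "[]"]
    lower_right_mult_mono_right_col[OF assms(5)]
  by (metis append_Nil2 mat_mult_id_right not_le word_mat_Nil)

lemmas word_eval_simps = word_mat_def digit_mat_def mat_id_def word_val_def

lemma record_setter_no_inner_0001000:
  assumes hR: "h \<in> R" and h0: "0 < h" and eq: "bin h = v @ [0,0,0,1,0,0,0] @ w"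
    and "v \<noteq> []" "set v \<subseteq> {0, 1}" "set w \<subseteq> {0, 1}"
  shows False
proof (cases rule: bit_word_Cons_cases[OF \<open>set w \<subseteq> {0, 1}\<close>])
  case 1
  from \<open>set v \<subseteq> {0, 1}\<close> show False
  proof (cases rule: bit_word_snoc_cases)
    case (2 v')
    then show False
      using record_setter_no_suffix[OF hR h0, of "[0,0,1,0,0,1,0]" "[0,0,0,0,1,0,0,0]" v'] eq 1
      by (simp add: word_eval_simps)
  next
    case (3 v')
    then show False
      using record_setter_no_suffix[OF hR h0, of "[0,1,0,1,0,0,1,0]" "[1,0,0,0,1,0,0,0]" v'] eq 1
      by (simp add: word_eval_simps)
  qed (use \<open>v \<noteq> []\<close> in simp)
next
  case (2 w')
  then show False
    using record_setter_no_factor[OF hR h0, of "[0,0,0,0,1,0,1,0]" "[0,0,0,1,0,0,0,0]" v w'] eq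
    by (simp add: word_eval_simps)
next
  case (3 w')
  from \<open>set w' \<subseteq> {0, 1}\<close> show False
  proof (cases rule: bit_word_Cons_cases)
    case 1
    then show False
      using record_setter_no_suffix[OF hR h0, of "[0,0,0,0,1,0,0,0]" "[0,0,0,1,0,0,0,1]" v] eq \<open>w = 1 # w'\<close>
      by (simp add: word_eval_simps)
  next
    case (2 w'')
    then show False
      using record_setter_no_factor[OF hR h0, of "[0,0,1,0,1,0,1,0]" "[0,0,0,1,0,0,0,1,0]" v w''] eq \<open>w = 1 # w'\<close>
      by (simp add: word_eval_simps)
  next
    case (3 w'')
    then show False
      using record_setter_no_factor[OF hR h0, of "[0,1,0,1,0,1,0,1]" "[0,0,0,1,0,0,0,1,1]" v w''] eq \<open>w = 1 # w'\<close>
      by (simp add: word_eval_simps)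
  qed
qed

lemma record_setter_no_inner_01001000:
  assumes hR: "h \<in> R" and h0: "0 < h" and eq: "bin h = v @ [0,1,0,0,1,0,0,0] @ w"
    and "v \<noteq> []" "hd v = 1" "set v \<subseteq> {0, 1}"
  shows False
proof (cases rule: bit_word_snoc_cases[OF \<open>set v \<subseteq> {0, 1}\<close>])
  case (2 v')
  then have "v' \<noteq> []" "hd v' = 1"
    using \<open>hd v = 1\<close> by (auto simp: hd_append split: if_splits)
  from \<open>set v' \<subseteq> {0, 1}\<close> show False
  proof (cases rule: bit_word_snoc_cases)
    case (2 v'')
    then have "v'' \<noteq> []"
      using \<open>hd v' = 1\<close> by auto
    from \<open>set v'' \<subseteq> {0, 1}\<close> this show False
    proof (cases rule: bit_word_snoc_cases)
      case (2 v''')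
      then show False
        using record_setter_no_factor[OF hR h0, of "[0,0,0,1,0,1,0,1,0,0]" "[0,0,0,0,1,0,0,1,0,0,0]" v''' w]
          eq \<open>v = v' @ [0]\<close> \<open>v' = v'' @ [0]\<close>
        by (simp add: word_eval_simps)
    next
      case (3 v''')
      then show False
        using record_setter_no_factor[OF hR h0, of "[0,1,0,0,1,0,1,0,1,0,0]" "[1,0,0,0,1,0,0,1,0,0,0]" v''' w]
          eq \<open>v = v' @ [0]\<close> \<open>v' = v'' @ [0]\<close>
        by (simp add: word_eval_simps)
    qed simp
  next
    case (3 v'')
    then show False
      using record_setter_no_factor[OF hR h0, of "[1,0,0,0,1,0,1,0,1,0]" "[1,0,0,1,0,0,1,0,0,0]" v'' w]
        eq \<open>v = v' @ [0]\<close>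
      by (simp add: word_eval_simps)
  qed (use \<open>v' \<noteq> []\<close> in simp)
next
  case (3 v')
  then show False
    using record_setter_no_factor[OF hR h0, of "[1,0,0,1,0,0,1,0,0]" "[1,0,1,0,0,1,0,0,0]" v' w] eq
    by (simp add: word_eval_simps)
qed (use \<open>v \<noteq> []\<close> in simp)

lemma record_setter_no_proper_prefix_1001000:
  assumes hR: "h \<in> R" and h0: "0 < h" and eq: "bin h = [1,0,0,1,0,0,0] @ w"
    and "w \<noteq> []" "set w \<subseteq> {0, 1}"
  shows False
proof (cases rule: bit_word_Cons_cases[OF \<open>set w \<subseteq> {0, 1}\<close>])
  case (2 w')
  then show False
    using record_setter_no_prefix[OF hR h0, of "[0,1,0,1,0,0,1,0]" "[1,0,0,1,0,0,0,0]" w'] eq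
    by (simp add: word_eval_simps)
next
  case (3 w')
  from \<open>set w' \<subseteq> {0, 1}\<close> show False
  proof (cases rule: bit_word_Cons_cases)
    case 1
    then show False
      using record_setter_no_suffix[OF hR h0, of "[0,1,0,0,1,0,0,0]" "[1,0,0,1,0,0,0,1]" "[]"] eq \<open>w = 1 # w'\<close>
      by (simp add: word_eval_simps)
  next
    case (2 w'')
    then show False
      using record_setter_no_prefix[OF hR h0, of "[0,1,0,1,0,1,0,1,0]" "[1,0,0,1,0,0,0,1,0]" w''] eq \<open>w = 1 # w'\<close>
      by (simp add: word_eval_simps)
  next
    case (3 w'')
    then show False
      using record_setter_no_prefix[OF hR h0, of "[0,1,1,0,1,0,1,0,1]" "[1,0,0,1,0,0,0,1,1]" w''] eq \<open>w = 1 # w'\<close>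
      by (simp add: word_eval_simps)
  qed
qed (use \<open>w \<noteq> []\<close> in simp)

lemma record_setter_no_1001000:
  assumes hR: "h \<in> R" and h0: "0 < h" and eq: "bin h = v @ [1,0,0,1,0,0,0] @ w"
    and "bin h \<noteq> [1,0,0,1,0,0,0]"
    and "v \<noteq> [] \<longrightarrow> hd v = 1" "set v \<subseteq> {0, 1}" "set w \<subseteq> {0, 1}"
  shows False
proof (cases rule: bit_word_snoc_cases[OF \<open>set v \<subseteq> {0, 1}\<close>])
  case 1
  then show False
    using record_setter_no_proper_prefix_1001000[OF hR h0, of w] assms(4,7) eq by simp
next
  case (2 v')
  then show False
    using record_setter_no_inner_01001000[OF hR h0, of v' w] assms(5) eq
    by (auto simp: hd_append split: if_splits)
next
  case (3 v')
  then show False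
    using record_setter_no_factor[OF hR h0, of "[1,0,0,1,0,0,1,0]" "[1,1,0,0,1,0,0,0]" v' w] eq
    by (simp add: word_eval_simps)
qed

lemma record_setter_no_inner_1000:
  assumes hR: "h \<in> R" and h0: "0 < h" and eq: "bin h = u @ [1,0,0,0] @ w"
    and "bin h \<noteq> [1,0,0,1,0,0,0]"
    and "u \<noteq> []" "hd u = 1" "set u \<subseteq> {0, 1}" "set w \<subseteq> {0, 1}"
  shows False
proof (cases rule: bit_word_snoc_cases[OF \<open>set u \<subseteq> {0, 1}\<close>])
  case (2 v)
  then have "v \<noteq> []" "hd v = 1"
    using \<open>hd u = 1\<close> by (auto simp: hd_append split: if_splits)
  from \<open>set v \<subseteq> {0, 1}\<close> show False
  proof (cases rule: bit_word_snoc_cases)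
    case (2 v')
    then have "v' \<noteq> []" "hd v' = 1"
      using \<open>hd v = 1\<close> by (auto simp: hd_append split: if_splits)
    from \<open>set v' \<subseteq> {0, 1}\<close> show False
    proof (cases rule: bit_word_snoc_cases)
      case (2 v'')
      then show False
        using record_setter_no_inner_0001000[OF hR h0, of v'' w] assms(8) \<open>hd v' = 1\<close>
          eq \<open>u = v @ [0]\<close> \<open>v = v' @ [0]\<close>
        by (auto simp: hd_append split: if_splits)
    next
      case (3 v'')
      then show False
        using record_setter_no_1001000[OF hR h0, of v'' w] assms(4,8) \<open>hd v' = 1\<close>
          eq \<open>u = v @ [0]\<close> \<open>v = v' @ [0]\<close>
        by (auto simp: hd_append split: if_splits)
    qed (use \<open>v' \<noteq> []\<close> in simp)
  next
    case (3 v')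
    then show False
      using record_setter_no_factor[OF hR h0, of "[1,0,0,1,0,0]" "[1,0,1,0,0,0]" v' w]
        eq \<open>u = v @ [0]\<close>
      by (simp add: word_eval_simps)
  qed (use \<open>v \<noteq> []\<close> in simp)
next
  case (3 v)
  then show False
    using record_setter_no_factor[OF hR h0, of "[1,0,0,1,0]" "[1,1,0,0,0]" v w] eq
    by (simp add: word_eval_simps)
qed (use \<open>u \<noteq> []\<close> in simp)

theorem mainTheorem8:
  fixes h :: nat
  assumes "h \<in> R"
    and "bin h \<noteq> [1,0,0,1,0,0,0]"
  shows "\<forall>u w. bin h = u @ [1,0,0,0] @ w \<longrightarrow> u = []"
proof (intro allI impI)
  fix u w
  assume eq: "bin h = u @ [1,0,0,0] @ w"
  have h0: "0 < h"
    using eq by (cases "h = 0") (auto simp: bin_def Cons_eq_append_conv)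
  then have "set (bin h) \<subseteq> {0, 1}" and hd: "hd (bin h) = 1"
    using bin_pos_bits[of h] bin_pos_hd[of h] by (simp_all add: bin_def)
  then have bits: "set u \<subseteq> {0, 1}" "set w \<subseteq> {0, 1}"
    by (simp_all add: eq)
  show "u = []"
  proof (rule ccontr)
    assume "u \<noteq> []"
    with hd have "hd u = 1"
      by (simp add: eq)
    with record_setter_no_inner_1000[OF assms(1) h0 eq assms(2) \<open>u \<noteq> []\<close> _ bits]
    show False .
  qed
qed

end
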